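(* Fix $t\in\{1,\dots,M\}$, corresponding to the pair $(i,j)$ with $C_t=C_{i,j}$, and let $z^*=(x^*,y^* )\in F(\mathcal{T}_t)$ with $|K_t(z^* )|=2$. Set $$r_t=\min\{g(x_i^*,x_j^*,w_i,w_j),\ g(y_i^*,y_j^*,h_i,h_j)\},\qquad g(a,b,c,d)=\frac{|(a-b)+(c-d)/2|}{\sqrt{2}}.$$ Then every $z\in B(z^*,r_t)$ satisfies $K_t(z)\subseteq K_t(z^* )$.
   Context: Fix reals $W,H>0$, integers $N\ge N_m\ge 2$, and widths $w_i>0$, heights $h_i>0$ for $1\le i\le N_m$. Points of $\mathbb{R}^{2N}$ are written $z=(x,y)$ with $x=(x_1,\dots,x_N)$, $y=(y_1,\dots,y_N)$. For $1\le i\le N_m$ let $B_i^x=\{z: 0\le x_i\le W-w_i\}$, $B_i^y=\{z: 0\le y_i\le H-h_i\}$; for $i\neq j$ let $B_{i,j}=B_i^x\cap B_i^y\cap B_j^x\cap B_j^y$, $O^x_{i,j}=\{z: x_i+w_i\le x_j\}$, $O^y_{i,j}=\{z: y_i+h_i\le y_j\}$. Define the closed convex sets $C_{i,j,\mathsf{L}}=O^x_{i,j}\cap B_{i,j}$, $C_{i,j,\mathsf{R}}=O^x_{j,i}\cap B_{i,j}$, $C_{i,j,\mathsf{B}}=O^y_{i,j}\cap B_{i,j}$, $C_{i,j,\mathsf{A}}=O^y_{j,i}\cap B_{i,j}$ (assumed nonempty) and $C_{i,j}=C_{i,j,\mathsf{L}}\cup C_{i,j,\mathsf{R}}\cup C_{i,j,\mathsf{B}}\cup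 C_{i,j,\mathsf{A}}$. Enumerate the pairs $1\le i<j\le N_m$ by $t=1,\dots,M$ and write $C_t=C_{i,j}$, $C_{t,k}=C_{i,j,k}$. With the Euclidean norm and $\mathrm{d}(z,C)=\inf_{c\in C}\|z-c\|$: $\mathcal{P}_t(z)=\{c\in C_t:\|z-c\|=\mathrm{d}(z,C_t)\}$, $P_{t,k}(z)$ is the unique nearest point of $C_{t,k}$ to $z$; for a fixed $\lambda\in(0,2)$, $\mathcal{T}_t(z)=\{z+\lambda(p-z):p\in\mathcal{P}_t(z)\}$, $F(\mathcal{T}_t)=\{z: z\in\mathcal{T}_t(z)\}$. Active indices: $K_t(z)=\{k\in\{\mathsf{L},\mathsf{R},\mathsf{B},\mathsf{A}\}: P_{t,k}(z)\in\mathcal{P}_t(z)\}$. $B(z,r)$ is the open Euclidean ball (empty if $r=0$). *)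

theory Defs
  imports "HOL-Analysis.Analysis"
begin

text \<open>Points of R^{2N} are pairs (x,y) of vectors in real^'n, where the finite
  index type 'n has N elements. The product norm is the Euclidean norm of R^{2N}.\<close>

type_synonym 'n pt = "(real^'n) \<times> (real^'n)"

datatype side = L | R | B | A

definition BX :: "real \<Rightarrow> ('n \<Rightarrow> real) \<Rightarrow> 'n \<Rightarrow> ('n::finite) pt set" where
  "BX W w i = {z. 0 \<le> fst z $ i \<and> fst z $ i \<le> W - w i}"

definition BY :: "real \<Rightarrow> ('n \<Rightarrow> real) \<Rightarrow> 'n \<Rightarrow> ('n::finite) pt set" where
  "BY H h i = {z. 0 \<le> snd z $ i \<and> snd z $ i \<le> H - h i}"

definition Bpair :: "real \<Rightarrow> real \<Rightarrow> ('n \<Rightarrow> real) \<Rightarrow> ('n \<Rightarrow> real) \<Rightarrow> 'n \<Rightarrow> 'n \<Rightarrow> ('n::finite) pt set" where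
  "Bpair W H w h i j = BX W w i \<inter> BY H h i \<inter> BX W w j \<inter> BY H h j"

definition OX :: "('n \<Rightarrow> real) \<Rightarrow> 'n \<Rightarrow> 'n \<Rightarrow> ('n::finite) pt set" where
  "OX w i j = {z. fst z $ i + w i \<le> fst z $ j}"

definition OY :: "('n \<Rightarrow> real) \<Rightarrow> 'n \<Rightarrow> 'n \<Rightarrow> ('n::finite) pt set" where
  "OY h i j = {z. snd z $ i + h i \<le> snd z $ j}"

definition Cpiece :: "real \<Rightarrow> real \<Rightarrow> ('n \<Rightarrow> real) \<Rightarrow> ('n \<Rightarrow> real) \<Rightarrow> 'n \<Rightarrow> 'n \<Rightarrow> side \<Rightarrow> ('n::finite) pt set" where
  "Cpiece W H w h i j k = (case k of
      L \<Rightarrow> OX w i j \<inter> Bpair W H w h i j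
    | R \<Rightarrow> OX w j i \<inter> Bpair W H w h i j
    | B \<Rightarrow> OY h i j \<inter> Bpair W H w h i j
    | A \<Rightarrow> OY h j i \<inter> Bpair W H w h i j)"

definition Cpair :: "real \<Rightarrow> real \<Rightarrow> ('n \<Rightarrow> real) \<Rightarrow> ('n \<Rightarrow> real) \<Rightarrow> 'n \<Rightarrow> 'n \<Rightarrow> ('n::finite) pt set" where
  "Cpair W H w h i j = (\<Union>k. Cpiece W H w h i j k)"

definition ProjSet :: "'a::metric_space set \<Rightarrow> 'a \<Rightarrow> 'a set" where
  "ProjSet C z = {c \<in> C. dist z c = infdist z C}"

definition Top :: "real \<Rightarrow> 'a::real_normed_vector set \<Rightarrow> 'a \<Rightarrow> 'a set" where
  "Top lam C z = {z + lam *\<^sub>R (p - z) | p. p \<in> ProjSet C z}"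

definition FixT :: "real \<Rightarrow> 'a::real_normed_vector set \<Rightarrow> 'a set" where
  "FixT lam C = {z. z \<in> Top lam C z}"

definition Kact :: "real \<Rightarrow> real \<Rightarrow> ('n \<Rightarrow> real) \<Rightarrow> ('n \<Rightarrow> real) \<Rightarrow> 'n \<Rightarrow> 'n \<Rightarrow> ('n::finite) pt \<Rightarrow> side set" where
  "Kact W H w h i j z =
     {k. closest_point (Cpiece W H w h i j k) z \<in> ProjSet (Cpair W H w h i j) z}"

definition gfun :: "real \<Rightarrow> real \<Rightarrow> real \<Rightarrow> real \<Rightarrow> real" where
  "gfun a b c d = \<bar>(a - b) + (c - d) / 2\<bar> / sqrt 2"

end

theory Submission
  imports Defs
begin

(* At a fixed point zs the relaxed projection is the identity, so zs lies in C and its active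
   pieces are exactly the pieces containing it.  The pieces L, R (and B, A) are disjoint, so two
   active pieces means zs lies in one piece of each pair.  Say zs is in L.  In the plane of the
   coordinates x_i, x_j the piece L cuts out a triangle with an edge on the line
   x_j - x_i = w_i, while R lies in the half-plane x_i - x_j >= w_j; the radius g is the distance
   from zs to the line midway between the two.  For z within g of zs, every point p of R is
   farther from z than a suitable point of that edge, so changing only the coordinates x_i, x_j
   of p yields a point of L strictly closer to z: the projection of z onto R is never a nearest
   point of C. *)

(* (X, Q) lies in the disc of radius u + g that touches the line X = 0 at the origin. *)
lemma tangent_disc_parabola_bound:
  fixes X Q t u g :: real
  assumes g: "0 < g" and u: "0 \<le> u" and t: "0 < t" and Q: "t + u \<le> Q"
    and disc: "(X - (u + g))\<^sup>2 + Q\<^sup>2 < (u + g)\<^sup>2"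
  shows "t\<^sup>2 < 4 * g * X"
proof -
  have "Q\<^sup>2 + X\<^sup>2 < 2 * (u + g) * X"
    using disc by (simp add: power2_eq_square algebra_simps)
  then have QX: "Q\<^sup>2 < 2 * (u + g) * X"
    using zero_le_power2[of X] by linarith
  have "Q\<^sup>2 < (u + g)\<^sup>2"
    using disc zero_le_power2[of "X - (u + g)"] by linarith
  then have "Q < u + g"
    using g u by (auto intro: power2_less_imp_less)
  then have "u * t\<^sup>2 \<le> g * t * u"
    using Q u t mult_left_mono[of t g "t * u"] by (simp add: power2_eq_square algebra_simps)
  moreover have "0 \<le> g * t * u" "0 \<le> g * t\<^sup>2" "0 \<le> g * u\<^sup>2"
    using g t u by simp_all
  moreover have "(u + g) * t\<^sup>2 = u * t\<^sup>2 + g * t\<^sup>2"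
    and "2 * g * (t + u)\<^sup>2 = 2 * (g * t\<^sup>2) + 4 * (g * t * u) + 2 * (g * u\<^sup>2)"
    by (simp_all add: power2_eq_square algebra_simps)
  ultimately have "(u + g) * t\<^sup>2 \<le> 2 * g * (t + u)\<^sup>2"
    by linarith
  also have "\<dots> < 2 * g * (2 * (u + g) * X)"
  proof -
    have "(t + u)\<^sup>2 \<le> Q\<^sup>2"
      using Q t u by (intro power_mono) auto
    then show ?thesis
      using QX g by (intro mult_strict_left_mono) auto
  qed
  also have "\<dots> = (u + g) * (4 * g * X)"
    by (simp add: algebra_simps)
  finally show ?thesis
    using g u by (simp add: mult_less_cancel_left_pos)
qed

(* The point ((\<sigma> - wa)/2, (\<sigma> + wa)/2) lies on the edge b - a = wa of the triangle
   0 \<le> a, a + wa \<le> b, b \<le> c - wb: \<sigma> is a + b clamped to the extent of that edge. *)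
lemma edge_point_closer:
  fixes a b as bs c wa wb pa pb :: real
  assumes wa: "0 < wa" and wb: "0 < wb"
    and as: "0 \<le> as" and asbs: "as + wa \<le> bs" and bs: "bs \<le> c - wb"
    and near: "(a - as)\<^sup>2 + (b - bs)\<^sup>2 < (gfun as bs wa wb)\<^sup>2"
    and p: "pb + wb \<le> pa"
  defines "\<sigma> \<equiv> max wa (min (a + b) (2 * c - wa - 2 * wb))"
  shows "(a - (\<sigma> - wa) / 2)\<^sup>2 + (b - (\<sigma> + wa) / 2)\<^sup>2 < (a - pa)\<^sup>2 + (b - pb)\<^sup>2"
proof -
  \<comment> \<open>In the rotated and scaled coordinates U = b - a - wa, S = a + b the ball becomes a disc
     tangent to the midline U = -g between the edge U = 0 and the half-plane U \<le> -2g containing p.\<close>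
  define g where "g = (wa + wb) / 2"
  define u where "u = bs - as - wa"
  define U where "U = b - a - wa"
  define S where "S = a + b"
  define Ss where "Ss = as + bs"
  have g: "0 < g" and u: "0 \<le> u"
    using wa wb asbs by (simp_all add: g_def u_def)
  have disc: "(U - u)\<^sup>2 + (S - Ss)\<^sup>2 < (u + g)\<^sup>2"
  proof -
    have "(U - u)\<^sup>2 + (S - Ss)\<^sup>2 = 2 * ((a - as)\<^sup>2 + (b - bs)\<^sup>2)"
      by (simp add: U_def u_def S_def Ss_def power2_eq_square algebra_simps)
    also have "\<dots> < 2 * (gfun as bs wa wb)\<^sup>2"
      using near by simp
    also have "\<dots> = (u + g)\<^sup>2"
      by (simp add: gfun_def u_def g_def power2_eq_square field_simps)
    finally show ?thesis .
  qed
  have above_midline: "0 < U + g"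
  proof -
    have "(U - u)\<^sup>2 < (u + g)\<^sup>2"
      using disc zero_le_power2[of "S - Ss"] by linarith
    then have "\<bar>U - u\<bar> < u + g"
      using u g by (simp add: power2_less_imp_less)
    then show ?thesis by linarith
  qed
  have along_edge: "(S - \<sigma>)\<^sup>2 < 4 * g * (U + g)"
  proof (cases "S < wa")
    case True
    then have "\<sigma> = wa"
      using as asbs bs by (auto simp: \<sigma>_def S_def)
    moreover have "(wa - S)\<^sup>2 < 4 * g * (U + g)"
      using True as disc
      by (intro tangent_disc_parabola_bound[OF g u, where Q = "Ss - S"])
        (simp_all add: u_def Ss_def power2_commute)
    ultimately show ?thesis by (simp add: power2_commute)
  next
    case False
    show ?thesis
    proof (cases "2 * c - wa - 2 * wb < S")
      case True
      then have "\<sigma> = 2 * c - wa - 2 * wb"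
        using as asbs bs by (auto simp: \<sigma>_def S_def)
      moreover have "(S - (2 * c - wa - 2 * wb))\<^sup>2 < 4 * g * (U + g)"
        using True bs disc
        by (intro tangent_disc_parabola_bound[OF g u, where Q = "S - Ss"])
          (simp_all add: u_def Ss_def)
      ultimately show ?thesis by simp
    next
      case False
      then have "\<sigma> = S"
        using \<open>\<not> S < wa\<close> by (simp add: \<sigma>_def S_def)
      then show ?thesis
        using g above_midline by simp
    qed
  qed
  have U2g: "U + 2 * g = b - a + wb"
    by (simp add: U_def g_def algebra_simps)
  have "2 * ((a - (\<sigma> - wa) / 2)\<^sup>2 + (b - (\<sigma> + wa) / 2)\<^sup>2) = U\<^sup>2 + (S - \<sigma>)\<^sup>2"
    by (simp add: U_def S_def power2_eq_square field_simps)
  also have "\<dots> < (U + 2 * g)\<^sup>2"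
    using along_edge by (simp add: power2_eq_square algebra_simps)
  also have "\<dots> \<le> ((pa - pb) - (a - b))\<^sup>2"
    unfolding U2g
  proof (rule power_mono)
    show "0 \<le> b - a + wb"
      using above_midline g U2g by linarith
  qed (use p in linarith)
  also have "\<dots> \<le> 2 * ((a - pa)\<^sup>2 + (b - pb)\<^sup>2)"
    using zero_le_power2[of "(a - pa) + (b - pb)"] by (simp add: power2_eq_square algebra_simps)
  finally show ?thesis by simp
qed

lemma dist_vec_sq_split_two:
  fixes u v :: "real^'n"
  assumes "i \<noteq> j"
  shows "(dist u v)\<^sup>2 =
    (u$i - v$i)\<^sup>2 + (u$j - v$j)\<^sup>2 + (L2_set (\<lambda>k. dist (u$k) (v$k)) (- {i, j}))\<^sup>2"
proof -
  have UNIV_eq: "(UNIV :: 'n set) = insert i (insert j (- {i, j}))" by auto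
  show ?thesis
    using assms unfolding dist_vec_def UNIV_eq by (simp add: dist_real_def)
qed

lemma two_coords_closer:
  fixes u us v :: "real^'n"
  assumes ij: "i \<noteq> j" and wa: "0 < wa" and wb: "0 < wb"
    and us: "0 \<le> us$i" "us$i + wa \<le> us$j" "us$j \<le> c - wb"
    and near: "dist us u < gfun (us$i) (us$j) wa wb"
    and v: "v$j + wb \<le> v$i"
  obtains v' where "0 \<le> v'$i" "v'$i \<le> c - wa" "0 \<le> v'$j" "v'$j \<le> c - wb"
    and "v'$i + wa \<le> v'$j" and "dist u v' < dist u v"
proof -
  define \<sigma> where "\<sigma> = max wa (min (u$i + u$j) (2 * c - wa - 2 * wb))"
  define v' where
    "v' = (\<chi> k. if k = i then (\<sigma> - wa) / 2 else if k = j then (\<sigma> + wa) / 2 else v$k)"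
  have "(u$i - us$i)\<^sup>2 + (u$j - us$j)\<^sup>2 \<le> (dist u us)\<^sup>2"
    using dist_vec_sq_split_two[OF ij, of u us] by simp
  also have "\<dots> < (gfun (us$i) (us$j) wa wb)\<^sup>2"
    using near by (simp add: dist_commute power_strict_mono)
  finally have "(u$i - v'$i)\<^sup>2 + (u$j - v'$j)\<^sup>2 < (u$i - v$i)\<^sup>2 + (u$j - v$j)\<^sup>2"
    using edge_point_closer[OF wa wb us _ v] ij by (simp add: v'_def \<sigma>_def)
  moreover have "L2_set (\<lambda>k. dist (u$k) (v'$k)) (- {i, j}) =
                 L2_set (\<lambda>k. dist (u$k) (v$k)) (- {i, j})"
    by (rule L2_set_cong) (auto simp: v'_def)
  ultimately have "(dist u v')\<^sup>2 < (dist u v)\<^sup>2"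
    by (simp add: dist_vec_sq_split_two[OF ij])
  then have closer: "dist u v' < dist u v"
    by (rule power2_less_imp_less) simp
  have \<sigma>_bounds: "wa \<le> \<sigma>" "\<sigma> \<le> 2 * c - wa - 2 * wb"
    using us wb by (auto simp: \<sigma>_def)
  have v'_ij: "v'$i = (\<sigma> - wa) / 2" "v'$j = (\<sigma> + wa) / 2"
    using ij by (simp_all add: v'_def)
  show ?thesis
    by (rule that[of v']) (use closer \<sigma>_bounds v'_ij wa wb in auto)
qed

lemma dist_Pair_less_fst:
  fixes a c c' :: "'a::metric_space" and b d :: "'b::metric_space"
  assumes "dist a c' < dist a c"
  shows "dist (a, b) (c', d) < dist (a, b) (c, d)"
  using assms by (simp add: dist_Pair_Pair power_strict_mono)

lemma dist_Pair_less_snd: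
  fixes b d d' :: "'b::metric_space" and a c :: "'a::metric_space"
  assumes "dist b d' < dist b d"
  shows "dist (a, b) (c, d') < dist (a, b) (c, d)"
  using assms by (simp add: dist_Pair_Pair power_strict_mono)

lemma closed_Cpiece: "closed (Cpiece W H w h i j k)"
  unfolding Cpiece_def Bpair_def BX_def BY_def OX_def OY_def
  by (cases k; simp; intro closed_Int closed_Collect_conj closed_Collect_le continuous_intros)

lemma Cpiece_L_closer_than_R:
  fixes z zs p :: "'n::finite pt"
  assumes ij: "i \<noteq> j" and w: "0 < w i" "0 < w j"
    and zs: "zs \<in> Cpiece W H w h i j L"
    and near: "dist zs z < gfun (fst zs $ i) (fst zs $ j) (w i) (w j)"
    and p: "p \<in> Cpiece W H w h i j R"
  shows "\<exists>q \<in> Cpiece W H w h i j L. dist z q < dist z p"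
proof -
  have zs_fst: "0 \<le> fst zs $ i" "fst zs $ i + w i \<le> fst zs $ j" "fst zs $ j \<le> W - w j"
    using zs by (auto simp: Cpiece_def OX_def Bpair_def BX_def)
  have near_fst: "dist (fst zs) (fst z) < gfun (fst zs $ i) (fst zs $ j) (w i) (w j)"
    using near dist_fst_le le_less_trans by blast
  have p_fst: "fst p $ j + w j \<le> fst p $ i"
    using p by (simp add: Cpiece_def OX_def)
  obtain x where x: "0 \<le> x$i" "x$i \<le> W - w i" "0 \<le> x$j" "x$j \<le> W - w j" "x$i + w i \<le> x$j"
    and closer: "dist (fst z) x < dist (fst z) (fst p)"
    by (rule two_coords_closer[OF ij w zs_fst near_fst p_fst])
  have "(x, snd p) \<in> Cpiece W H w h i j L"
    using x p by (auto simp: Cpiece_def OX_def Bpair_def BX_def BY_def)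
  moreover have "dist z (x, snd p) < dist z p"
    using dist_Pair_less_fst[OF closer, of "snd z" "snd p"] by simp
  ultimately show ?thesis by blast
qed

lemma Cpiece_B_closer_than_A:
  fixes z zs p :: "'n::finite pt"
  assumes ij: "i \<noteq> j" and h: "0 < h i" "0 < h j"
    and zs: "zs \<in> Cpiece W H w h i j B"
    and near: "dist zs z < gfun (snd zs $ i) (snd zs $ j) (h i) (h j)"
    and p: "p \<in> Cpiece W H w h i j A"
  shows "\<exists>q \<in> Cpiece W H w h i j B. dist z q < dist z p"
proof -
  have zs_snd: "0 \<le> snd zs $ i" "snd zs $ i + h i \<le> snd zs $ j" "snd zs $ j \<le> H - h j"
    using zs by (auto simp: Cpiece_def OY_def Bpair_def BY_def)
  have near_snd: "dist (snd zs) (snd z) < gfun (snd zs $ i) (snd zs $ j) (h i) (h j)"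
    using near dist_snd_le le_less_trans by blast
  have p_snd: "snd p $ j + h j \<le> snd p $ i"
    using p by (simp add: Cpiece_def OY_def)
  obtain y where y: "0 \<le> y$i" "y$i \<le> H - h i" "0 \<le> y$j" "y$j \<le> H - h j" "y$i + h i \<le> y$j"
    and closer: "dist (snd z) y < dist (snd z) (snd p)"
    by (rule two_coords_closer[OF ij h zs_snd near_snd p_snd])
  have "(fst p, y) \<in> Cpiece W H w h i j B"
    using y p by (auto simp: Cpiece_def OY_def Bpair_def BX_def BY_def)
  moreover have "dist z (fst p, y) < dist z p"
    using dist_Pair_less_snd[OF closer, of "fst z" "fst p"] by simp
  ultimately show ?thesis by blast
qed

definition opposite :: "side \<Rightarrow> side" where
  "opposite k = (case k of L \<Rightarrow> R | R \<Rightarrow> L | B \<Rightarrow> A | A \<Rightarrow> B)"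

lemma opposite_opposite [simp]: "opposite (opposite k) = k"
  by (cases k) (simp_all add: opposite_def)

lemma Cpiece_swap: "Cpiece W H w h j i k = Cpiece W H w h i j (opposite k)"
  by (cases k) (auto simp: Cpiece_def opposite_def Bpair_def)

lemma gfun_swap: "gfun b a d c = gfun a b c d"
proof -
  have "(b - a) + (d - c) / 2 = - ((a - b) + (c - d) / 2)"
    by (simp add: field_simps)
  then show ?thesis
    unfolding gfun_def by (simp only: abs_minus_cancel)
qed

lemma Cpiece_opposite_disjoint:
  assumes "0 < w i" "0 < w j" "0 < h i" "0 < h j"
  shows "Cpiece W H w h i j k \<inter> Cpiece W H w h i j (opposite k) = {}"
  using assms by (cases k) (auto simp: Cpiece_def opposite_def OX_def OY_def)

lemma Cpiece_closer_than_opposite: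
  fixes z zs p :: "'n::finite pt"
  assumes ij: "i \<noteq> j" and w: "\<And>k. 0 < w k" and h: "\<And>k. 0 < h k"
    and zs: "zs \<in> Cpiece W H w h i j k"
    and near: "dist zs z < min (gfun (fst zs $ i) (fst zs $ j) (w i) (w j))
                              (gfun (snd zs $ i) (snd zs $ j) (h i) (h j))"
    and p: "p \<in> Cpiece W H w h i j (opposite k)"
  shows "\<exists>q \<in> Cpiece W H w h i j k. dist z q < dist z p"
proof (cases k)
  case L
  then show ?thesis
    using Cpiece_L_closer_than_R[OF ij w[of i] w[of j]] zs near p by (simp add: opposite_def)
next
  case R
  have "\<exists>q \<in> Cpiece W H w h j i L. dist z q < dist z p"
    by (rule Cpiece_L_closer_than_R[OF ij[symmetric] w[of j] w[of i]])
      (use zs near p R in \<open>auto simp: Cpiece_swap[of W H w h j i] opposite_def gfun_swap\<close>)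
  then show ?thesis
    using R by (simp add: Cpiece_swap[of W H w h j i] opposite_def)
next
  case B
  then show ?thesis
    using Cpiece_B_closer_than_A[OF ij h[of i] h[of j]] zs near p by (simp add: opposite_def)
next
  case A
  have "\<exists>q \<in> Cpiece W H w h j i B. dist z q < dist z p"
    by (rule Cpiece_B_closer_than_A[OF ij[symmetric] h[of j] h[of i]])
      (use zs near p A in \<open>auto simp: Cpiece_swap[of W H w h j i] opposite_def gfun_swap\<close>)
  then show ?thesis
    using A by (simp add: Cpiece_swap[of W H w h j i] opposite_def)
qed

lemma card_2_side_opposite:
  assumes "card S = 2" and "\<And>k. \<not> (k \<in> S \<and> opposite k \<in> S)"
  shows "k \<in> S \<or> opposite k \<in> S"
proof -
  obtain x y where S: "S = {x, y}" "x \<noteq> y"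
    using assms(1) by (auto simp: card_2_iff)
  moreover have "x \<noteq> opposite y"
    using assms(2)[of y] S by auto
  ultimately show ?thesis
    by (cases x; cases y; cases k) (auto simp: opposite_def)
qed

lemma ProjSet_subset: "ProjSet C z \<subseteq> C"
  by (auto simp: ProjSet_def)

lemma ProjSet_self: "z \<in> C \<Longrightarrow> ProjSet C z = {z}"
  by (auto simp: ProjSet_def)

lemma ProjSet_disjoint_if_closer:
  assumes "\<And>p. p \<in> S \<Longrightarrow> \<exists>q \<in> C. dist z q < dist z p"
  shows "ProjSet C z \<inter> S = {}"
proof (rule equals0I)
  fix p
  assume p: "p \<in> ProjSet C z \<inter> S"
  then obtain q where "q \<in> C" and "dist z q < dist z p"
    using assms by blast
  moreover have "dist z p = infdist z C"
    using p by (simp add: ProjSet_def)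
  ultimately show False
    using infdist_le[of q C z] by simp
qed

lemma FixT_subset:
  assumes "lam \<noteq> 0"
  shows "FixT lam C \<subseteq> C"
proof
  fix z
  assume "z \<in> FixT lam C"
  then obtain p where "z = z + lam *\<^sub>R (p - z)" and p: "p \<in> ProjSet C z"
    by (auto simp: FixT_def Top_def)
  then have "p = z"
    using assms by simp
  then show "z \<in> C"
    using p ProjSet_subset by blast
qed

lemma closest_point_eq_self_iff:
  assumes "closed S" and "S \<noteq> {}"
  shows "closest_point S z = z \<longleftrightarrow> z \<in> S"
  using closest_point_in_set[OF assms, of z] closest_point_self[of z S] by auto

lemma Kact_at_point_of_Cpair:
  assumes "zs \<in> Cpair W H w h i j" and "\<And>k. Cpiece W H w h i j k \<noteq> {}"
  shows "Kact W H w h i j zs = {k. zs \<in> Cpiece W H w h i j k}"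
  using assms closest_point_eq_self_iff[OF closed_Cpiece assms(2)]
  by (simp add: Kact_def ProjSet_self)

lemma opposite_not_in_Kact:
  fixes z zs :: "'n::finite pt"
  assumes "i \<noteq> j" and "\<And>k. 0 < w k" and "\<And>k. 0 < h k"
    and ne: "\<And>k. Cpiece W H w h i j k \<noteq> {}"
    and "zs \<in> Cpiece W H w h i j k"
    and "dist zs z < min (gfun (fst zs $ i) (fst zs $ j) (w i) (w j))
                         (gfun (snd zs $ i) (snd zs $ j) (h i) (h j))"
  shows "opposite k \<notin> Kact W H w h i j z"
proof -
  have "Cpiece W H w h i j k \<subseteq> Cpair W H w h i j"
    by (auto simp: Cpair_def)
  then have "ProjSet (Cpair W H w h i j) z \<inter> Cpiece W H w h i j (opposite k) = {}"
    using Cpiece_closer_than_opposite[OF assms(1-3,5,6)] by (intro ProjSet_disjoint_if_closer) blast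
  moreover have "closest_point (Cpiece W H w h i j (opposite k)) z \<in> Cpiece W H w h i j (opposite k)"
    by (rule closest_point_in_set[OF closed_Cpiece ne])
  ultimately show ?thesis
    by (auto simp: Kact_def)
qed

theorem mainTheorem6:
  fixes W H lam :: real and w h :: "'n::finite \<Rightarrow> real" and i j :: 'n
    and zs :: "'n pt"
  assumes "W > 0" and "H > 0"
    and "\<And>k. w k > 0" and "\<And>k. h k > 0"
    and "i \<noteq> j"
    and "0 < lam" and "lam < 2"
    and "\<And>k. Cpiece W H w h i j k \<noteq> {}"
    and "zs \<in> FixT lam (Cpair W H w h i j)"
    and "card (Kact W H w h i j zs) = 2"
  shows "\<forall>z \<in> ball zs
            (min (gfun (fst zs $ i) (fst zs $ j) (w i) (w j))
                 (gfun (snd zs $ i) (snd zs $ j) (h i) (h j))).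
           Kact W H w h i j z \<subseteq> Kact W H w h i j zs"
proof (intro ballI subsetI)
  fix z k
  assume near: "z \<in> ball zs (min (gfun (fst zs $ i) (fst zs $ j) (w i) (w j))
                                 (gfun (snd zs $ i) (snd zs $ j) (h i) (h j)))"
    and k: "k \<in> Kact W H w h i j z"
  \<comment> \<open>only lam \<noteq> 0 is needed\<close>
  have "zs \<in> Cpair W H w h i j"
    using FixT_subset[of lam] assms(6,9) by auto
  then have Kzs: "Kact W H w h i j zs = {k. zs \<in> Cpiece W H w h i j k}"
    using assms(8) by (rule Kact_at_point_of_Cpair)
  have "opposite k \<notin> Kact W H w h i j zs"
  proof
    assume "opposite k \<in> Kact W H w h i j zs"
    then have "zs \<in> Cpiece W H w h i j (opposite k)"
      using Kzs by simp
    then have "opposite (opposite k) \<notin> Kact W H w h i j z"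
      using near by (intro opposite_not_in_Kact[OF assms(5,3,4,8)]) simp_all
    then show False
      using k by simp
  qed
  moreover have "\<not> (k' \<in> Kact W H w h i j zs \<and> opposite k' \<in> Kact W H w h i j zs)" for k'
    using Cpiece_opposite_disjoint[of w i j h] assms(3,4) Kzs by blast
  ultimately show "k \<in> Kact W H w h i j zs"
    using card_2_side_opposite[OF assms(10)] by blast
qed

end
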